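(* Let $\mathcal{H}$ be a symmetric and complete hypothesis set of functions $\mathcal{X}\times\overline{\mathcal{Y}}\to\mathbb{R}$, let $c\colon\mathcal{X}\times\mathcal{Y}\to[0,1]$ be any cost function, and let $\Psi(t)=1-t$. Then for all $h\in\mathcal{H}$ and any distribution on $\mathcal{X}\times\mathcal{Y}$, $$\mathcal{E}_{\mathsf{L}_{\mathrm{def}}}(h)-\mathcal{E}^*_{\mathsf{L}_{\mathrm{def}}}(\mathcal{H})+\mathcal{M}_{\mathsf{L}_{\mathrm{def}}}(\mathcal{H})\le (n+1)\big(\mathcal{E}_{\mathsf{L}_{\mathrm{RL2D}}}(h)-\mathcal{E}^*_{\mathsf{L}_{\mathrm{RL2D}}}(\mathcal{H})+\mathcal{M}_{\mathsf{L}_{\mathrm{RL2D}}}(\mathcal{H})\big).$$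
   Context: Learning to defer. $\mathcal{X}$ is an input space, $\mathcal{Y}=[n]$, $\overline{\mathcal{Y}}=\{1,\dots,n+1\}$ with $n+1$ meaning "defer". For $h\colon\mathcal{X}\times\overline{\mathcal{Y}}\to\mathbb{R}$, $\mathsf{h}(x)=\operatorname{argmax}_{y\in\overline{\mathcal{Y}}}h(x,y)$ with a fixed deterministic tie-breaking rule. Given a cost $c\colon\mathcal{X}\times\mathcal{Y}\to[0,1]$, the deferral loss is $\mathsf{L}_{\mathrm{def}}(h,x,y)=1_{\mathsf{h}(x)\neq y}1_{\mathsf{h}(x)\in[n]}+c(x,y)1_{\mathsf{h}(x)=n+1}$, and for $\Psi\colon[0,1]\to\mathbb{R}_+\cup\{+\infty\}$ non-increasing the surrogate is $\mathsf{L}_{\mathrm{RL2D}}(h,x,y)=c(x,y)\Psi\big(\frac{e^{h(x,y)}}{\sum_{y'\in\overline{\mathcal{Y}}}e^{h(x,y')}}\big)+(1-c(x,y))\Psi\big(\frac{e^{h(x,y)}+e^{h(x,n+1)}}{\sum_{y'\in\overline{\mathcal{Y}}}e^{h(x,y')}}\big)$. For a loss $\mathsf{L}$: $\mathcal{E}_{\mathsf{L}}(h)=\mathbb{E}_{(x,y)}[\mathsf{L}(h,x,y)]$, $\mathcal{E}^*_{\mathsf{L}}(\mathcal{H})=\inf_{h\in\mathcal{H}}\mathcal{E}_{\mathsf{L}}(h)$, $\mathcal{M}_{\mathsf{L}}(\mathcal{H})=\mathcal{E}^*_{\mathsf{L}}(\mathcal{H})-\mathbb{E}_x[\inf_{h\in\mathcal{H}}\mathbb{E}_{y\mid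 x}[\mathsf{L}(h,x,y)]]$. $\mathcal{H}$ is symmetric if there is a family $\mathcal{F}$ of functions $\mathcal{X}\to\mathbb{R}$ with $\{[h(x,1),\dots,h(x,n+1)]:h\in\mathcal{H}\}=\{[f_1(x),\dots,f_{n+1}(x)]:f_i\in\mathcal{F}\}$ for every $x$; $\mathcal{H}$ is complete if $\{h(x,y):h\in\mathcal{H}\}=\mathbb{R}$ for every $(x,y)\in\mathcal{X}\times\mathcal{Y}$. *)

theory Defs
  imports "HOL-Probability.Probability"
begin

text \<open>Labels: Y = {1..n}; Ybar = {1..n+1}, where n+1 means defer.
  A hypothesis is h :: 'x => nat => real (only its values on Ybar matter).\<close>

definition Ybar :: "nat \<Rightarrow> nat set" where
  "Ybar n = {1..Suc n}"

definition tie_rule :: "nat \<Rightarrow> (nat set \<Rightarrow> nat) \<Rightarrow> bool" where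
  "tie_rule n sel \<longleftrightarrow> (\<forall>S. S \<subseteq> Ybar n \<and> S \<noteq> {} \<longrightarrow> sel S \<in> S)"

definition hpred :: "(nat set \<Rightarrow> nat) \<Rightarrow> nat \<Rightarrow> ('x \<Rightarrow> nat \<Rightarrow> real) \<Rightarrow> 'x \<Rightarrow> nat" where
  "hpred sel n h x = sel {y \<in> Ybar n. h x y = (MAX y' \<in> Ybar n. h x y')}"

definition L_def :: "(nat set \<Rightarrow> nat) \<Rightarrow> nat \<Rightarrow> ('x \<Rightarrow> nat \<Rightarrow> real) \<Rightarrow>
    ('x \<Rightarrow> nat \<Rightarrow> real) \<Rightarrow> 'x \<Rightarrow> nat \<Rightarrow> real" where
  "L_def sel n c h x y =
     (if hpred sel n h x \<noteq> y \<and> hpred sel n h x \<in> {1..n} then 1 else 0)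
     + c x y * (if hpred sel n h x = Suc n then 1 else 0)"

definition softmax :: "nat \<Rightarrow> ('x \<Rightarrow> nat \<Rightarrow> real) \<Rightarrow> 'x \<Rightarrow> nat \<Rightarrow> real" where
  "softmax n h x y = exp (h x y) / (\<Sum>y'\<in>Ybar n. exp (h x y'))"

definition L_RL2D :: "(real \<Rightarrow> real) \<Rightarrow> nat \<Rightarrow> ('x \<Rightarrow> nat \<Rightarrow> real) \<Rightarrow>
    ('x \<Rightarrow> nat \<Rightarrow> real) \<Rightarrow> 'x \<Rightarrow> nat \<Rightarrow> real" where
  "L_RL2D \<Psi> n c h x y =
     c x y * \<Psi> (softmax n h x y)
     + (1 - c x y) * \<Psi> ((exp (h x y) + exp (h x (Suc n))) / (\<Sum>y'\<in>Ybar n. exp (h x y')))"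

text \<open>A distribution on X x Y is given by its X-marginal M (a probability measure)
  and the conditional distribution p x y = P(Y = y | X = x), y in {1..n}.\<close>

definition cond_risk :: "nat \<Rightarrow> ('x \<Rightarrow> nat \<Rightarrow> real) \<Rightarrow>
    (('x \<Rightarrow> nat \<Rightarrow> real) \<Rightarrow> 'x \<Rightarrow> nat \<Rightarrow> real) \<Rightarrow> ('x \<Rightarrow> nat \<Rightarrow> real) \<Rightarrow> 'x \<Rightarrow> real" where
  "cond_risk n p L h x = (\<Sum>y\<in>{1..n}. p x y * L h x y)"

definition risk :: "'x measure \<Rightarrow> nat \<Rightarrow> ('x \<Rightarrow> nat \<Rightarrow> real) \<Rightarrow>
    (('x \<Rightarrow> nat \<Rightarrow> real) \<Rightarrow> 'x \<Rightarrow> nat \<Rightarrow> real) \<Rightarrow> ('x \<Rightarrow> nat \<Rightarrow> real) \<Rightarrow> real" where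
  "risk M n p L h = (\<integral>x. cond_risk n p L h x \<partial>M)"

definition best_risk :: "'x measure \<Rightarrow> nat \<Rightarrow> ('x \<Rightarrow> nat \<Rightarrow> real) \<Rightarrow>
    (('x \<Rightarrow> nat \<Rightarrow> real) \<Rightarrow> 'x \<Rightarrow> nat \<Rightarrow> real) \<Rightarrow> ('x \<Rightarrow> nat \<Rightarrow> real) set \<Rightarrow> real" where
  "best_risk M n p L H = (INF h\<in>H. risk M n p L h)"

definition min_gap :: "'x measure \<Rightarrow> nat \<Rightarrow> ('x \<Rightarrow> nat \<Rightarrow> real) \<Rightarrow>
    (('x \<Rightarrow> nat \<Rightarrow> real) \<Rightarrow> 'x \<Rightarrow> nat \<Rightarrow> real) \<Rightarrow> ('x \<Rightarrow> nat \<Rightarrow> real) set \<Rightarrow> real" where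
  "min_gap M n p L H = best_risk M n p L H - (\<integral>x. (INF h\<in>H. cond_risk n p L h x) \<partial>M)"

definition symmetric_hyp :: "nat \<Rightarrow> ('x \<Rightarrow> nat \<Rightarrow> real) set \<Rightarrow> bool" where
  "symmetric_hyp n H \<longleftrightarrow> (\<exists>F :: ('x \<Rightarrow> real) set. \<forall>x.
     (\<lambda>h. map (\<lambda>y. h x y) [1..<n+2]) ` H
       = (\<lambda>fs. map (\<lambda>f. f x) fs) ` {fs. length fs = Suc n \<and> set fs \<subseteq> F})"

definition complete_hyp :: "nat \<Rightarrow> ('x \<Rightarrow> nat \<Rightarrow> real) set \<Rightarrow> bool" where
  "complete_hyp n H \<longleftrightarrow> (\<forall>x. \<forall>y\<in>{1..n}. (\<lambda>h. h x y) ` H = UNIV)"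

end

theory Submission
  imports Defs
begin

text \<open>Let q(x, y) = decision_gain n p c x y be the expected gain (one minus the conditional
  deferral loss) of deciding y at x: the conditional probability p(y|x) for y \<le> n, and the
  expected saving \<Sum>y. p(y|x) (1 - c(x, y)) for deferral.  The conditional deferral risk of h is then
  1 - q(x, h(x)), and for \<Psi>(t) = 1 - t the conditional surrogate risk is
  1 - \<Sum>y. q(x, y) s(x, y), with s the softmax of the scores of h.  Over a symmetric complete
  class both conditional infima equal 1 - max_y q(x, y): the first is attained by a hypothesis
  whose scores peak at an optimal decision, the second is approached by sharpening that peak.
  Since the predicted decision carries softmax mass at least 1/(n + 1), the conditional excess
  deferral risk is at most n + 1 times the conditional excess surrogate risk.  The minimizability
  gaps turn excess risks into expected conditional excess risks, so integrating the pointwise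
  bound gives the theorem.\<close>

lemma finite_Ybar [simp]: "finite (Ybar n)"
  by (simp add: Ybar_def)

lemma Ybar_nonempty [simp]: "Ybar n \<noteq> {}"
  by (simp add: Ybar_def)

lemma card_Ybar [simp]: "card (Ybar n) = Suc n"
  by (simp add: Ybar_def)

lemma Ybar_eq_insert: "Ybar n = insert (Suc n) {1..n}"
  by (auto simp: Ybar_def)

lemma argmax_set_eq:
  fixes g :: "'x \<Rightarrow> nat \<Rightarrow> real"
  shows "{y \<in> Ybar n. g x y = (MAX y' \<in> Ybar n. g x y')} = {y \<in> Ybar n. \<forall>y'\<in>Ybar n. g x y' \<le> g x y}"
proof (rule Collect_cong, rule conj_cong[OF refl])
  fix y assume "y \<in> Ybar n"
  then show "g x y = (MAX y' \<in> Ybar n. g x y') \<longleftrightarrow> (\<forall>y'\<in>Ybar n. g x y' \<le> g x y)"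
    by (subst eq_commute, subst Max_eq_iff) auto
qed

lemma hpred_is_argmax:
  fixes g :: "'x \<Rightarrow> nat \<Rightarrow> real"
  assumes "tie_rule n sel"
  shows hpred_in_Ybar: "hpred sel n g x \<in> Ybar n"
    and hpred_maximal: "y \<in> Ybar n \<Longrightarrow> g x y \<le> g x (hpred sel n g x)"
proof -
  let ?S = "{y \<in> Ybar n. \<forall>y'\<in>Ybar n. g x y' \<le> g x y}"
  have "(MAX y' \<in> Ybar n. g x y') \<in> (\<lambda>y. g x y) ` Ybar n"
    by (rule Max_in) simp_all
  then obtain y0 where "y0 \<in> Ybar n" "g x y0 = (MAX y' \<in> Ybar n. g x y')"
    by (rule imageE) simp
  then have "y0 \<in> ?S"
    unfolding argmax_set_eq[symmetric] by simp
  then have "?S \<noteq> {}"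
    by blast
  moreover have "?S \<subseteq> Ybar n"
    by blast
  ultimately have "sel ?S \<in> ?S"
    using assms unfolding tie_rule_def by (simp only: simp_thms)
  then have "hpred sel n g x \<in> ?S"
    unfolding hpred_def argmax_set_eq .
  then show "hpred sel n g x \<in> Ybar n" "y \<in> Ybar n \<Longrightarrow> g x y \<le> g x (hpred sel n g x)"
    by blast+
qed

lemma hpred_eqI:
  fixes g :: "'x \<Rightarrow> nat \<Rightarrow> real"
  assumes "tie_rule n sel" "k \<in> Ybar n" "\<And>y. y \<in> Ybar n \<Longrightarrow> y \<noteq> k \<Longrightarrow> g x y < g x k"
  shows "hpred sel n g x = k"
proof (rule ccontr)
  assume "hpred sel n g x \<noteq> k"
  then have "g x (hpred sel n g x) < g x k"
    by (rule assms(3)[OF hpred_in_Ybar[OF assms(1)]])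
  moreover have "g x k \<le> g x (hpred sel n g x)"
    by (rule hpred_maximal[OF assms(1,2)])
  ultimately show False
    by linarith
qed

lemma score_functions_onto:
  fixes H :: "('x \<Rightarrow> nat \<Rightarrow> real) set"
  assumes F: "(\<lambda>h. map (\<lambda>y. h x y) [1..<n+2]) ` H
      = (\<lambda>fs. map (\<lambda>f. f x) fs) ` {fs. length fs = Suc n \<and> set fs \<subseteq> F}"
    and compl: "complete_hyp n H" and n: "1 \<le> n"
  shows "\<exists>f. f \<in> F \<and> f x = r"
proof -
  have "r \<in> (\<lambda>h. h x 1) ` H"
    using compl n unfolding complete_hyp_def by simp
  then obtain g where g: "g \<in> H" "g x 1 = r"
    by blast
  have "map (\<lambda>y. g x y) [1..<n+2] \<in> (\<lambda>fs. map (\<lambda>f. f x) fs) ` {fs. length fs = Suc n \<and> set fs \<subseteq> F}"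
    unfolding F[symmetric] using g(1) by (rule imageI)
  then obtain fs where fs: "map (\<lambda>y. g x y) [1..<n+2] = map (\<lambda>f. f x) fs"
      "fs \<in> {fs. length fs = Suc n \<and> set fs \<subseteq> F}"
    by (rule imageE)
  have "(fs ! 0) x = map (\<lambda>f. f x) fs ! 0"
    using fs(2) by simp
  also have "\<dots> = map (\<lambda>y. g x y) [1..<n+2] ! 0"
    using fs(1) by simp
  also have "\<dots> = r"
    using g(2) by (simp del: upt_Suc)
  finally have "(fs ! 0) x = r" .
  moreover have "fs ! 0 \<in> F"
    using fs(2) nth_mem[of 0 fs] by auto
  ultimately show ?thesis
    by blast
qed

lemma symmetric_complete_hyp_realizes:
  fixes H :: "('x \<Rightarrow> nat \<Rightarrow> real) set"
  assumes sym: "symmetric_hyp n H" and compl: "complete_hyp n H" and n: "1 \<le> n"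
  obtains g where "g \<in> H" "\<And>y. y \<in> Ybar n \<Longrightarrow> g x y = v y"
proof -
  from sym obtain F :: "('x \<Rightarrow> real) set" where "\<forall>x. (\<lambda>h. map (\<lambda>y. h x y) [1..<n+2]) ` H
      = (\<lambda>fs. map (\<lambda>f. f x) fs) ` {fs. length fs = Suc n \<and> set fs \<subseteq> F}"
    unfolding symmetric_hyp_def ..
  then have F: "(\<lambda>h. map (\<lambda>y. h x y) [1..<n+2]) ` H
      = (\<lambda>fs. map (\<lambda>f. f x) fs) ` {fs. length fs = Suc n \<and> set fs \<subseteq> F}"
    by (rule spec)
  have "\<forall>r. \<exists>f. f \<in> F \<and> f x = r"
    using score_functions_onto[OF F compl n] ..
  from choice[OF this] obtain pick where pick: "\<forall>r. pick r \<in> F \<and> pick r x = r"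
    by (rule exE)
  have "map v [1..<n+2] = map (\<lambda>f. f x) (map (\<lambda>y. pick (v y)) [1..<n+2])"
    using pick by simp
  moreover have "map (\<lambda>y. pick (v y)) [1..<n+2] \<in> {fs. length fs = Suc n \<and> set fs \<subseteq> F}"
    using pick by auto
  ultimately have "map v [1..<n+2] \<in> (\<lambda>h. map (\<lambda>y. h x y) [1..<n+2]) ` H"
    unfolding F by (rule image_eqI)
  then obtain g where g: "map v [1..<n+2] = map (\<lambda>y. g x y) [1..<n+2]" "g \<in> H"
    by (rule imageE)
  have "g x y = v y" if "y \<in> Ybar n" for y
  proof -
    have "y \<in> set [1..<n+2]"
      using that by (auto simp: Ybar_def)
    then show ?thesis
      using g(1) by (simp only: map_eq_conv)
  qed
  with g(2) show ?thesis
    by (rule that)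
qed

lemma softmax_pos: "0 < softmax n g x y"
  unfolding softmax_def by (simp add: sum_pos)

lemma sum_softmax: "(\<Sum>y\<in>Ybar n. softmax n g x y) = 1"
proof -
  have "0 < (\<Sum>y\<in>Ybar n. exp (g x y))"
    by (simp add: sum_pos)
  then show ?thesis
    unfolding softmax_def by (simp add: sum_divide_distrib[symmetric])
qed

lemma softmax_hpred_ge:
  assumes "tie_rule n sel"
  shows "1 \<le> real (Suc n) * softmax n g x (hpred sel n g x)"
proof -
  have "softmax n g x y \<le> softmax n g x (hpred sel n g x)" if "y \<in> Ybar n" for y
    unfolding softmax_def using hpred_maximal[OF assms that]
    by (intro divide_right_mono) (simp_all add: sum_nonneg)
  then have "(\<Sum>y\<in>Ybar n. softmax n g x y) \<le> (\<Sum>y\<in>Ybar n. softmax n g x (hpred sel n g x))"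
    by (rule sum_mono)
  then show ?thesis
    by (simp add: sum_softmax)
qed

lemma one_minus_softmax_peak:
  assumes "k \<in> Ybar n" "\<And>y. y \<in> Ybar n \<Longrightarrow> g x y = (if y = k then t else 0)"
  shows "1 - softmax n g x k = real n / (exp t + real n)"
proof -
  have "(\<Sum>y\<in>Ybar n. exp (g x y)) = exp (g x k) + (\<Sum>y\<in>Ybar n - {k}. exp (g x y))"
    using assms(1) by (simp add: sum.remove)
  also have "\<dots> = exp t + real n"
    using assms by (simp add: card_Diff_singleton)
  finally have Z: "(\<Sum>y\<in>Ybar n. exp (g x y)) = exp t + real n" .
  have "0 < exp t + real n"
    by (simp add: add_pos_nonneg)
  moreover have "g x k = t"
    using assms by simp
  ultimately show ?thesis
    unfolding softmax_def Z by (simp add: field_simps)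
qed

lemma weighted_mean_le:
  fixes q s :: "'a \<Rightarrow> real"
  assumes "\<And>y. y \<in> Y \<Longrightarrow> 0 \<le> s y" "sum s Y = 1" "\<And>y. y \<in> Y \<Longrightarrow> q y \<le> m"
  shows "(\<Sum>y\<in>Y. q y * s y) \<le> m"
proof -
  have "(\<Sum>y\<in>Y. q y * s y) \<le> (\<Sum>y\<in>Y. m * s y)"
    using assms(1,3) by (intro sum_mono mult_right_mono)
  also have "\<dots> = m"
    using assms(2) by (simp add: sum_distrib_left[symmetric])
  finally show ?thesis .
qed

lemma gap_le_scaled_mean_gap:
  fixes q s :: "'a \<Rightarrow> real"
  assumes "finite Y" "k \<in> Y" "\<And>y. y \<in> Y \<Longrightarrow> 0 \<le> s y" "sum s Y = 1"
    and "\<And>y. y \<in> Y \<Longrightarrow> q y \<le> m" and "1 \<le> N * s k"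
  shows "m - q k \<le> N * (m - (\<Sum>y\<in>Y. q y * s y))"
proof -
  have "(\<Sum>y\<in>Y - {k}. q y * s y) \<le> (\<Sum>y\<in>Y - {k}. m * s y)"
    using assms(3,5) by (intro sum_mono mult_right_mono) auto
  also have "\<dots> = m * (1 - s k)"
    using assms(1,2,4) by (simp add: sum_distrib_left[symmetric] sum_diff1)
  finally have "(\<Sum>y\<in>Y. q y * s y) \<le> q k * s k + m * (1 - s k)"
    using assms(1,2) by (simp add: sum.remove)
  then have mean_gap: "s k * (m - q k) \<le> m - (\<Sum>y\<in>Y. q y * s y)"
    by (simp add: algebra_simps)
  have "0 \<le> s k"
    using assms(2,3) by simp
  then have "0 \<le> N"
    using assms(6) by (smt (verit) mult_nonpos_nonneg)
  have "0 \<le> m - q k"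
    using assms(2,5) by simp
  with assms(6) have "(m - q k) * 1 \<le> (m - q k) * (N * s k)"
    by (intro mult_left_mono)
  then have "m - q k \<le> N * (s k * (m - q k))"
    by (simp add: mult_ac)
  also have "\<dots> \<le> N * (m - (\<Sum>y\<in>Y. q y * s y))"
    using mean_gap \<open>0 \<le> N\<close> by (rule mult_left_mono)
  finally show ?thesis .
qed

lemma mean_gap_le_one_minus_weight:
  fixes q s :: "'a \<Rightarrow> real"
  assumes "finite Y" "k \<in> Y" "\<And>y. y \<in> Y \<Longrightarrow> 0 \<le> s y" "sum s Y = 1"
    and "\<And>y. y \<in> Y \<Longrightarrow> 0 \<le> q y" and "q k \<le> 1"
  shows "q k - (\<Sum>y\<in>Y. q y * s y) \<le> 1 - s k"
proof -
  have "q k * s k \<le> (\<Sum>y\<in>Y. q y * s y)"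
    using assms(1,2,3,5) by (intro member_le_sum) simp_all
  moreover have "s k \<le> 1"
    using assms(1,2,3,4) member_le_sum[of k Y s] by simp
  ultimately have "q k - (\<Sum>y\<in>Y. q y * s y) \<le> q k * (1 - s k)"
    by (simp add: algebra_simps)
  also have "\<dots> \<le> 1 - s k"
    using \<open>s k \<le> 1\<close> assms(2,5,6) by (intro mult_left_le_one_le) simp_all
  finally show ?thesis .
qed

definition decision_gain ::
    "nat \<Rightarrow> ('x \<Rightarrow> nat \<Rightarrow> real) \<Rightarrow> ('x \<Rightarrow> nat \<Rightarrow> real) \<Rightarrow> 'x \<Rightarrow> nat \<Rightarrow> real" where
  "decision_gain n p c x y = (if y = Suc n then (\<Sum>y'\<in>{1..n}. p x y' * (1 - c x y')) else p x y)"

definition max_decision_gain ::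
    "nat \<Rightarrow> ('x \<Rightarrow> nat \<Rightarrow> real) \<Rightarrow> ('x \<Rightarrow> nat \<Rightarrow> real) \<Rightarrow> 'x \<Rightarrow> real" where
  "max_decision_gain n p c x = (MAX y \<in> Ybar n. decision_gain n p c x y)"

lemma decision_gain_le_max:
  "y \<in> Ybar n \<Longrightarrow> decision_gain n p c x y \<le> max_decision_gain n p c x"
  unfolding max_decision_gain_def by simp

lemma max_decision_gain_attained:
  obtains y where "y \<in> Ybar n" "decision_gain n p c x y = max_decision_gain n p c x"
proof -
  have "max_decision_gain n p c x \<in> decision_gain n p c x ` Ybar n"
    unfolding max_decision_gain_def by (rule Max_in) simp_all
  then obtain y where "max_decision_gain n p c x = decision_gain n p c x y" "y \<in> Ybar n"
    by (rule imageE)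
  then show ?thesis
    using that by simp
qed

lemma decision_gain_bounds:
  assumes "\<forall>y\<in>{1..n}. 0 \<le> p x y" "(\<Sum>y\<in>{1..n}. p x y) = 1" "\<forall>y\<in>{1..n}. 0 \<le> c x y \<and> c x y \<le> 1"
    and "y \<in> Ybar n"
  shows "0 \<le> decision_gain n p c x y" "decision_gain n p c x y \<le> 1"
proof -
  have "0 \<le> decision_gain n p c x y \<and> decision_gain n p c x y \<le> 1"
  proof (cases "y = Suc n")
    case True
    have "(\<Sum>y'\<in>{1..n}. p x y' * (1 - c x y')) \<le> (\<Sum>y'\<in>{1..n}. p x y')"
      using assms(1,3) by (intro sum_mono mult_left_le) auto
    moreover have "0 \<le> (\<Sum>y'\<in>{1..n}. p x y' * (1 - c x y'))"
      using assms(1,3) by (intro sum_nonneg) simp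
    ultimately show ?thesis
      using True assms(2) by (simp add: decision_gain_def)
  next
    case False
    then have y: "y \<in> {1..n}"
      using assms(4) by (auto simp: Ybar_def)
    then have "p x y \<le> (\<Sum>y\<in>{1..n}. p x y)"
      using assms(1) by (intro member_le_sum) simp_all
    then show ?thesis
      using False assms(1,2) y by (simp add: decision_gain_def)
  qed
  then show "0 \<le> decision_gain n p c x y" "decision_gain n p c x y \<le> 1"
    by simp_all
qed

lemma cond_risk_L_def_eq:
  assumes sel: "tie_rule n sel" and p_sum: "(\<Sum>y\<in>{1..n}. p x y) = 1"
  shows "cond_risk n p (L_def sel n c) g x = 1 - decision_gain n p c x (hpred sel n g x)"
proof -
  let ?k = "hpred sel n g x"
  show ?thesis
  proof (cases "?k = Suc n")
    case True
    have "cond_risk n p (L_def sel n c) g x = (\<Sum>y\<in>{1..n}. p x y * c x y)"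
      unfolding cond_risk_def L_def_def using True by (intro sum.cong) auto
    also have "\<dots> = (\<Sum>y\<in>{1..n}. p x y) - (\<Sum>y\<in>{1..n}. p x y * (1 - c x y))"
      by (simp add: sum_subtractf[symmetric] algebra_simps)
    finally show ?thesis
      using True p_sum by (simp add: decision_gain_def)
  next
    case False
    then have k: "?k \<in> {1..n}"
      using hpred_in_Ybar[OF sel, where g = g and x = x] by (auto simp: Ybar_def)
    have "cond_risk n p (L_def sel n c) g x = (\<Sum>y\<in>{1..n}. p x y - (if y = ?k then p x y else 0))"
      unfolding cond_risk_def L_def_def using False k by (intro sum.cong) auto
    also have "\<dots> = (\<Sum>y\<in>{1..n}. p x y) - p x ?k"
      using k by (simp add: sum_subtractf)
    finally show ?thesis
      using False p_sum by (simp add: decision_gain_def)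
  qed
qed

lemma cond_risk_L_RL2D_eq:
  assumes p_sum: "(\<Sum>y\<in>{1..n}. p x y) = 1"
  shows "cond_risk n p (L_RL2D (\<lambda>t. 1 - t) n c) g x
     = 1 - (\<Sum>y\<in>Ybar n. decision_gain n p c x y * softmax n g x y)"
proof -
  let ?s = "softmax n g x"
  have "p x y * L_RL2D (\<lambda>t. 1 - t) n c g x y = p x y - p x y * ?s y - ?s (Suc n) * (p x y * (1 - c x y))"
    for y
  proof -
    have "L_RL2D (\<lambda>t. 1 - t) n c g x y = c x y * (1 - ?s y) + (1 - c x y) * (1 - ?s y - ?s (Suc n))"
      unfolding L_RL2D_def softmax_def by (simp add: add_divide_distrib)
    then show ?thesis
      by (simp add: ring_distribs)
  qed
  then have "cond_risk n p (L_RL2D (\<lambda>t. 1 - t) n c) g x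
      = (\<Sum>y\<in>{1..n}. p x y - p x y * ?s y - ?s (Suc n) * (p x y * (1 - c x y)))"
    unfolding cond_risk_def by simp
  also have "\<dots> = 1 - (\<Sum>y\<in>{1..n}. p x y * ?s y) - ?s (Suc n) * (\<Sum>y\<in>{1..n}. p x y * (1 - c x y))"
    using p_sum by (simp add: sum_subtractf sum_distrib_left)
  also have "\<dots> = 1 - (\<Sum>y\<in>Ybar n. decision_gain n p c x y * ?s y)"
    unfolding Ybar_eq_insert by (simp add: decision_gain_def algebra_simps)
  finally show ?thesis .
qed

lemma max_decision_gain_bounds:
  assumes "\<forall>y\<in>{1..n}. 0 \<le> p x y" "(\<Sum>y\<in>{1..n}. p x y) = 1" "\<forall>y\<in>{1..n}. 0 \<le> c x y \<and> c x y \<le> 1"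
  shows "0 \<le> max_decision_gain n p c x" "max_decision_gain n p c x \<le> 1"
proof -
  obtain k where "k \<in> Ybar n" "decision_gain n p c x k = max_decision_gain n p c x"
    by (rule max_decision_gain_attained)
  then show "0 \<le> max_decision_gain n p c x" "max_decision_gain n p c x \<le> 1"
    using decision_gain_bounds[where p = p and x = x and c = c, OF assms] by metis+
qed

lemma cond_risk_L_def_bounds:
  assumes "tie_rule n sel"
    and "\<forall>y\<in>{1..n}. 0 \<le> p x y" "(\<Sum>y\<in>{1..n}. p x y) = 1" "\<forall>y\<in>{1..n}. 0 \<le> c x y \<and> c x y \<le> 1"
  shows "0 \<le> cond_risk n p (L_def sel n c) h x" "cond_risk n p (L_def sel n c) h x \<le> 1"
  unfolding cond_risk_L_def_eq[where p = p and x = x, OF assms(1,3)]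
  using decision_gain_bounds[where p = p and x = x and c = c, OF assms(2-4) hpred_in_Ybar[OF assms(1)]]
  by simp_all

lemma cond_risk_L_RL2D_bounds:
  assumes "\<forall>y\<in>{1..n}. 0 \<le> p x y" "(\<Sum>y\<in>{1..n}. p x y) = 1" "\<forall>y\<in>{1..n}. 0 \<le> c x y \<and> c x y \<le> 1"
  shows "0 \<le> cond_risk n p (L_RL2D (\<lambda>t. 1 - t) n c) h x"
    and "cond_risk n p (L_RL2D (\<lambda>t. 1 - t) n c) h x \<le> 1"
proof -
  note gain_bounds = decision_gain_bounds[where p = p and x = x and c = c, OF assms]
  have "0 \<le> (\<Sum>y\<in>Ybar n. decision_gain n p c x y * softmax n h x y)"
    using gain_bounds(1) by (intro sum_nonneg mult_nonneg_nonneg) (simp_all add: less_imp_le[OF softmax_pos])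
  moreover have "(\<Sum>y\<in>Ybar n. decision_gain n p c x y * softmax n h x y) \<le> 1"
    using gain_bounds(2) by (intro weighted_mean_le) (simp_all add: less_imp_le[OF softmax_pos] sum_softmax)
  ultimately show "0 \<le> cond_risk n p (L_RL2D (\<lambda>t. 1 - t) n c) h x"
    and "cond_risk n p (L_RL2D (\<lambda>t. 1 - t) n c) h x \<le> 1"
    unfolding cond_risk_L_RL2D_eq[where p = p and x = x, OF assms(2)] by simp_all
qed

lemma cINF_eqI_approx:
  fixes f :: "'a \<Rightarrow> real"
  assumes "H \<noteq> {}" "\<And>g. g \<in> H \<Longrightarrow> b \<le> f g" "\<And>e. 0 < e \<Longrightarrow> \<exists>g\<in>H. f g \<le> b + e"
  shows "(INF g\<in>H. f g) = b"
proof (rule antisym)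
  have bdd: "bdd_below (f ` H)"
    using assms(2) by (rule bdd_belowI2)
  show "(INF g\<in>H. f g) \<le> b"
  proof (rule field_le_epsilon)
    fix e :: real
    assume "0 < e"
    then obtain g where "g \<in> H" "f g \<le> b + e"
      using assms(3) by blast
    then show "(INF g\<in>H. f g) \<le> b + e"
      using cINF_lower[OF bdd] by (blast intro: order_trans)
  qed
  show "b \<le> (INF g\<in>H. f g)"
    using assms(1,2) by (rule cINF_greatest)
qed

lemma INF_cond_risk_L_def:
  assumes sel: "tie_rule n sel" and sym: "symmetric_hyp n H" and compl: "complete_hyp n H"
    and n: "1 \<le> n" and "H \<noteq> {}" and p_sum: "(\<Sum>y\<in>{1..n}. p x y) = 1"
  shows "(INF g\<in>H. cond_risk n p (L_def sel n c) g x) = 1 - max_decision_gain n p c x"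
proof (rule cINF_eqI_approx)
  show "1 - max_decision_gain n p c x \<le> cond_risk n p (L_def sel n c) g x" for g
    unfolding cond_risk_L_def_eq[where p = p and x = x, OF sel p_sum]
    using decision_gain_le_max[OF hpred_in_Ybar[OF sel]] by simp
  obtain k where k: "k \<in> Ybar n" "decision_gain n p c x k = max_decision_gain n p c x"
    by (rule max_decision_gain_attained)
  obtain g where g: "g \<in> H" "\<And>y. y \<in> Ybar n \<Longrightarrow> g x y = (if y = k then 1 else 0)"
    by (rule symmetric_complete_hyp_realizes[where x = x and v = "\<lambda>y. if y = k then 1 else 0",
          OF sym compl n]) blast
  have "hpred sel n g x = k"
    using g(2) k(1) by (intro hpred_eqI[OF sel]) simp_all
  then have "cond_risk n p (L_def sel n c) g x = 1 - max_decision_gain n p c x"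
    unfolding cond_risk_L_def_eq[where p = p and x = x, OF sel p_sum] using k(2) by simp
  with g(1) show "\<exists>g\<in>H. cond_risk n p (L_def sel n c) g x \<le> 1 - max_decision_gain n p c x + e"
    if "0 < e" for e
    using that by force
qed (fact \<open>H \<noteq> {}\<close>)

lemma INF_cond_risk_L_RL2D:
  assumes sym: "symmetric_hyp n H" and compl: "complete_hyp n H" and n: "1 \<le> n" and "H \<noteq> {}"
    and p_nonneg: "\<forall>y\<in>{1..n}. 0 \<le> p x y" and p_sum: "(\<Sum>y\<in>{1..n}. p x y) = 1"
    and c_range: "\<forall>y\<in>{1..n}. 0 \<le> c x y \<and> c x y \<le> 1"
  shows "(INF g\<in>H. cond_risk n p (L_RL2D (\<lambda>t. 1 - t) n c) g x) = 1 - max_decision_gain n p c x"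
proof (rule cINF_eqI_approx)
  note gain_bounds = decision_gain_bounds[where p = p and x = x and c = c, OF p_nonneg p_sum c_range]
  show "1 - max_decision_gain n p c x \<le> cond_risk n p (L_RL2D (\<lambda>t. 1 - t) n c) g x" for g
    unfolding cond_risk_L_RL2D_eq[where p = p and x = x, OF p_sum]
    using weighted_mean_le[OF less_imp_le[OF softmax_pos] sum_softmax decision_gain_le_max] by simp
  show "\<exists>g\<in>H. cond_risk n p (L_RL2D (\<lambda>t. 1 - t) n c) g x \<le> 1 - max_decision_gain n p c x + e"
    if e: "0 < e" for e
  proof -
    obtain k where k: "k \<in> Ybar n" "decision_gain n p c x k = max_decision_gain n p c x"
      by (rule max_decision_gain_attained)
    define t where "t = ln (real n / e)"
    have exp_t: "exp t = real n / e"
      unfolding t_def using n e by simp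
    obtain g where g: "g \<in> H" "\<And>y. y \<in> Ybar n \<Longrightarrow> g x y = (if y = k then t else 0)"
      by (rule symmetric_complete_hyp_realizes[where x = x and v = "\<lambda>y. if y = k then t else 0",
            OF sym compl n]) blast
    have "max_decision_gain n p c x - (\<Sum>y\<in>Ybar n. decision_gain n p c x y * softmax n g x y)
        \<le> 1 - softmax n g x k"
      unfolding k(2)[symmetric]
      using k(1) gain_bounds
      by (intro mean_gap_le_one_minus_weight) (simp_all add: less_imp_le[OF softmax_pos] sum_softmax)
    also have "\<dots> = real n / (exp t + real n)"
      by (rule one_minus_softmax_peak[where g = g and x = x, OF k(1) g(2)])
    also have "\<dots> \<le> real n / exp t"
      using n by (intro divide_left_mono) (simp_all add: add_pos_nonneg)
    also have "\<dots> = e"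
      unfolding exp_t using n e by simp
    finally have "cond_risk n p (L_RL2D (\<lambda>t. 1 - t) n c) g x \<le> 1 - max_decision_gain n p c x + e"
      unfolding cond_risk_L_RL2D_eq[where p = p and x = x, OF p_sum] by simp
    with g(1) show ?thesis
      by blast
  qed
qed (fact \<open>H \<noteq> {}\<close>)

lemma cond_excess_L_def_le_cond_excess_L_RL2D:
  assumes sel: "tie_rule n sel" and sym: "symmetric_hyp n H" and compl: "complete_hyp n H"
    and n: "1 \<le> n" and h: "h \<in> H"
    and p_nonneg: "\<forall>y\<in>{1..n}. 0 \<le> p x y" and p_sum: "(\<Sum>y\<in>{1..n}. p x y) = 1"
    and c_range: "\<forall>y\<in>{1..n}. 0 \<le> c x y \<and> c x y \<le> 1"
  shows "cond_risk n p (L_def sel n c) h x - (INF g\<in>H. cond_risk n p (L_def sel n c) g x)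
    \<le> real (n + 1) * (cond_risk n p (L_RL2D (\<lambda>t. 1 - t) n c) h x
      - (INF g\<in>H. cond_risk n p (L_RL2D (\<lambda>t. 1 - t) n c) g x))"
proof -
  have "H \<noteq> {}"
    using h by blast
  have "max_decision_gain n p c x - decision_gain n p c x (hpred sel n h x)
    \<le> real (n + 1) * (max_decision_gain n p c x - (\<Sum>y\<in>Ybar n. decision_gain n p c x y * softmax n h x y))"
    using softmax_hpred_ge[OF sel, where g = h and x = x]
    by (intro gap_le_scaled_mean_gap[OF finite_Ybar hpred_in_Ybar[OF sel]])
      (simp_all add: less_imp_le[OF softmax_pos] sum_softmax decision_gain_le_max)
  then show ?thesis
    unfolding INF_cond_risk_L_def[where p = p and x = x, OF sel sym compl n \<open>H \<noteq> {}\<close> p_sum]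
      INF_cond_risk_L_RL2D[where p = p and x = x and c = c, OF sym compl n \<open>H \<noteq> {}\<close> p_nonneg p_sum c_range]
    unfolding cond_risk_L_def_eq[where p = p and x = x, OF sel p_sum]
      cond_risk_L_RL2D_eq[where p = p and x = x, OF p_sum]
    by simp
qed

lemma measurable_hpred:
  fixes h :: "'x \<Rightarrow> nat \<Rightarrow> real"
  assumes "\<forall>y\<in>Ybar n. (\<lambda>x. h x y) \<in> borel_measurable M"
  shows "hpred sel n h \<in> M \<rightarrow>\<^sub>M count_space UNIV"
proof -
  note [measurable] = assms[rule_format]
  define A where "A x = {y \<in> Ybar n. \<forall>y'\<in>Ybar n. h x y' \<le> h x y}" for x
  have "Measurable.pred M (\<lambda>x. A x = S)" if "S \<subseteq> Ybar n" for S
  proof -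
    have "(\<lambda>x. A x = S) = (\<lambda>x. \<forall>y\<in>Ybar n. y \<in> S \<longleftrightarrow> (\<forall>y'\<in>Ybar n. h x y' \<le> h x y))"
      using that unfolding A_def by auto
    then show ?thesis
      by simp
  qed
  then have "A \<in> M \<rightarrow>\<^sub>M count_space (Pow (Ybar n))"
    unfolding measurable_count_space_eq2[OF finite_Pow_iff[THEN iffD2, OF finite_Ybar]]
    by (auto simp: A_def Measurable.pred_def vimage_def Int_def conj_commute)
  moreover have "hpred sel n h = sel \<circ> A"
    unfolding hpred_def argmax_set_eq A_def by auto
  ultimately show ?thesis
    by (simp add: measurable_comp[OF _ measurable_count_space])
qed

lemma borel_measurable_cond_risk_L_def:
  assumes "\<forall>y\<in>Ybar n. (\<lambda>x. h x y) \<in> borel_measurable M"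
    and "\<forall>y\<in>{1..n}. (\<lambda>x. c x y) \<in> borel_measurable M"
    and "\<forall>y\<in>{1..n}. (\<lambda>x. p x y) \<in> borel_measurable M"
  shows "cond_risk n p (L_def sel n c) h \<in> borel_measurable M"
  unfolding cond_risk_def[abs_def]
proof (intro borel_measurable_sum)
  fix y
  assume "y \<in> {1..n}"
  with assms(2,3) have [measurable]: "(\<lambda>x. c x y) \<in> borel_measurable M" "(\<lambda>x. p x y) \<in> borel_measurable M"
    by simp_all
  let ?f = "\<lambda>k x. p x y * ((if k \<noteq> y \<and> k \<in> {1..n} then 1 else 0) + c x y * (if k = Suc n then 1 else 0))"
  have "(\<lambda>x. ?f (hpred sel n h x) x) \<in> borel_measurable M"
    by (rule measurable_compose_countable[OF _ measurable_hpred[OF assms(1)]]) measurable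
  then show "(\<lambda>x. p x y * L_def sel n c h x y) \<in> borel_measurable M"
    unfolding L_def_def by simp
qed

lemma borel_measurable_cond_risk_L_RL2D:
  assumes "\<forall>y\<in>Ybar n. (\<lambda>x. h x y) \<in> borel_measurable M"
    and "\<forall>y\<in>{1..n}. (\<lambda>x. c x y) \<in> borel_measurable M"
    and "\<forall>y\<in>{1..n}. (\<lambda>x. p x y) \<in> borel_measurable M"
  shows "cond_risk n p (L_RL2D (\<lambda>t. 1 - t) n c) h \<in> borel_measurable M"
proof -
  note [measurable] = assms[rule_format]
  have [measurable]: "(\<lambda>x. h x y) \<in> borel_measurable M" if "y \<in> {1..n}" for y
    using that by (simp add: assms(1) Ybar_def)
  have [measurable]: "(\<lambda>x. h x (Suc n)) \<in> borel_measurable M"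
    by (simp add: assms(1) Ybar_def)
  show ?thesis
    unfolding cond_risk_def[abs_def] L_RL2D_def softmax_def by measurable
qed

lemma borel_measurable_decision_gain:
  assumes "\<forall>y\<in>{1..n}. (\<lambda>x. c x y) \<in> borel_measurable M"
    and "\<forall>y\<in>{1..n}. (\<lambda>x. p x y) \<in> borel_measurable M"
    and "y \<in> Ybar n"
  shows "(\<lambda>x. decision_gain n p c x y) \<in> borel_measurable M"
proof (cases "y = Suc n")
  case True
  note [measurable] = assms(1,2)[rule_format]
  have "(\<lambda>x. \<Sum>y'\<in>{1..n}. p x y' * (1 - c x y')) \<in> borel_measurable M"
    by measurable
  then show ?thesis
    using True by (simp add: decision_gain_def)
next
  case False
  then have "y \<in> {1..n}"
    using assms(3) by (auto simp: Ybar_def)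
  then show ?thesis
    using False assms(2) by (simp add: decision_gain_def)
qed

lemma borel_measurable_max_decision_gain:
  assumes "\<forall>y\<in>{1..n}. (\<lambda>x. c x y) \<in> borel_measurable M"
    and "\<forall>y\<in>{1..n}. (\<lambda>x. p x y) \<in> borel_measurable M"
  shows "max_decision_gain n p c \<in> borel_measurable M"
  unfolding max_decision_gain_def[abs_def]
  by (rule borel_measurable_Max[OF finite_Ybar borel_measurable_decision_gain[OF assms]])

lemma integrable_unit_bounded:
  fixes f :: "'a \<Rightarrow> real"
  assumes "finite_measure M" "f \<in> borel_measurable M"
    and "\<And>x. x \<in> space M \<Longrightarrow> 0 \<le> f x" "\<And>x. x \<in> space M \<Longrightarrow> f x \<le> 1"
  shows "integrable M f"
  using assms(1) _ assms(2)
proof (rule finite_measure.integrable_const_bound[where B = 1])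
  show "AE x in M. norm (f x) \<le> 1"
    using assms(3,4) by (intro AE_I2) simp
qed

lemma integrable_cond_risk_L_def:
  assumes "finite_measure M" "tie_rule n sel"
    and "\<forall>y\<in>Ybar n. (\<lambda>x. h x y) \<in> borel_measurable M"
    and "\<forall>y\<in>{1..n}. (\<lambda>x. c x y) \<in> borel_measurable M"
    and "\<forall>y\<in>{1..n}. (\<lambda>x. p x y) \<in> borel_measurable M"
    and "\<forall>x\<in>space M. \<forall>y\<in>{1..n}. 0 \<le> p x y" "\<forall>x\<in>space M. (\<Sum>y\<in>{1..n}. p x y) = 1"
    and "\<forall>x\<in>space M. \<forall>y\<in>{1..n}. 0 \<le> c x y \<and> c x y \<le> 1"
  shows "integrable M (cond_risk n p (L_def sel n c) h)"
  using assms(1) borel_measurable_cond_risk_L_def[OF assms(3-5)]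
    cond_risk_L_def_bounds[where p = p and c = c,
      OF assms(2) bspec[OF assms(6)] bspec[OF assms(7)] bspec[OF assms(8)]]
  by (rule integrable_unit_bounded)

lemma integrable_cond_risk_L_RL2D:
  assumes "finite_measure M"
    and "\<forall>y\<in>Ybar n. (\<lambda>x. h x y) \<in> borel_measurable M"
    and "\<forall>y\<in>{1..n}. (\<lambda>x. c x y) \<in> borel_measurable M"
    and "\<forall>y\<in>{1..n}. (\<lambda>x. p x y) \<in> borel_measurable M"
    and "\<forall>x\<in>space M. \<forall>y\<in>{1..n}. 0 \<le> p x y" "\<forall>x\<in>space M. (\<Sum>y\<in>{1..n}. p x y) = 1"
    and "\<forall>x\<in>space M. \<forall>y\<in>{1..n}. 0 \<le> c x y \<and> c x y \<le> 1"
  shows "integrable M (cond_risk n p (L_RL2D (\<lambda>t. 1 - t) n c) h)"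
  using assms(1) borel_measurable_cond_risk_L_RL2D[OF assms(2-4)]
    cond_risk_L_RL2D_bounds[where p = p and c = c,
      OF bspec[OF assms(5)] bspec[OF assms(6)] bspec[OF assms(7)]]
  by (rule integrable_unit_bounded)

lemma integrable_max_decision_gain:
  assumes "finite_measure M"
    and "\<forall>y\<in>{1..n}. (\<lambda>x. c x y) \<in> borel_measurable M"
    and "\<forall>y\<in>{1..n}. (\<lambda>x. p x y) \<in> borel_measurable M"
    and "\<forall>x\<in>space M. \<forall>y\<in>{1..n}. 0 \<le> p x y" "\<forall>x\<in>space M. (\<Sum>y\<in>{1..n}. p x y) = 1"
    and "\<forall>x\<in>space M. \<forall>y\<in>{1..n}. 0 \<le> c x y \<and> c x y \<le> 1"
  shows "integrable M (max_decision_gain n p c)"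
  using assms(1) borel_measurable_max_decision_gain[OF assms(2,3)]
    max_decision_gain_bounds[where p = p and c = c,
      OF bspec[OF assms(4)] bspec[OF assms(5)] bspec[OF assms(6)]]
  by (rule integrable_unit_bounded)

lemma excess_risk_bound_from_conditional:
  assumes "integrable M (cond_risk n p L h)" "integrable M (\<lambda>x. INF g\<in>H. cond_risk n p L g x)"
    and "integrable M (cond_risk n p L' h)" "integrable M (\<lambda>x. INF g\<in>H. cond_risk n p L' g x)"
    and "\<And>x. x \<in> space M \<Longrightarrow> cond_risk n p L h x - (INF g\<in>H. cond_risk n p L g x)
      \<le> C * (cond_risk n p L' h x - (INF g\<in>H. cond_risk n p L' g x))"
  shows "risk M n p L h - best_risk M n p L H + min_gap M n p L H
    \<le> C * (risk M n p L' h - best_risk M n p L' H + min_gap M n p L' H)"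
proof -
  have "risk M n p L h - best_risk M n p L H + min_gap M n p L H
      = (\<integral>x. cond_risk n p L h x - (INF g\<in>H. cond_risk n p L g x) \<partial>M)"
    unfolding min_gap_def risk_def using assms(1,2) by simp
  also have "\<dots> \<le> (\<integral>x. C * (cond_risk n p L' h x - (INF g\<in>H. cond_risk n p L' g x)) \<partial>M)"
    using assms by (intro integral_mono) auto
  also have "\<dots> = C * (risk M n p L' h - best_risk M n p L' H + min_gap M n p L' H)"
    unfolding min_gap_def risk_def using assms(3,4) by simp
  finally show ?thesis .
qed

theorem theorem3:
  fixes n :: nat and H :: "('x \<Rightarrow> nat \<Rightarrow> real) set"
    and c :: "'x \<Rightarrow> nat \<Rightarrow> real" and sel :: "nat set \<Rightarrow> nat"
    and M :: "'x measure" and p :: "'x \<Rightarrow> nat \<Rightarrow> real" and h :: "'x \<Rightarrow> nat \<Rightarrow> real"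
  assumes n: "n \<ge> 1"
    and sel: "tie_rule n sel"
    and sym: "symmetric_hyp n H"
    and compl: "complete_hyp n H"
    and H_meas: "\<forall>g\<in>H. \<forall>y\<in>Ybar n. (\<lambda>x. g x y) \<in> borel_measurable M"
    and c_range: "\<forall>x. \<forall>y\<in>{1..n}. 0 \<le> c x y \<and> c x y \<le> 1"
    and c_meas: "\<forall>y\<in>{1..n}. (\<lambda>x. c x y) \<in> borel_measurable M"
    and M: "prob_space M"
    and p_nonneg: "\<forall>x\<in>space M. \<forall>y\<in>{1..n}. 0 \<le> p x y"
    and p_sum: "\<forall>x\<in>space M. (\<Sum>y\<in>{1..n}. p x y) = 1"
    and p_meas: "\<forall>y\<in>{1..n}. (\<lambda>x. p x y) \<in> borel_measurable M"
    and h: "h \<in> H"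
  shows "risk M n p (L_def sel n c) h - best_risk M n p (L_def sel n c) H
           + min_gap M n p (L_def sel n c) H
         \<le> real (n + 1) * (risk M n p (L_RL2D (\<lambda>t. 1 - t) n c) h
           - best_risk M n p (L_RL2D (\<lambda>t. 1 - t) n c) H
           + min_gap M n p (L_RL2D (\<lambda>t. 1 - t) n c) H)"
proof -
  have fin: "finite_measure M"
    using M by (rule prob_space.finite_measure)
  have "H \<noteq> {}"
    using h by blast
  have h_meas: "\<forall>y\<in>Ybar n. (\<lambda>x. h x y) \<in> borel_measurable M"
    using H_meas h by blast
  have c_range': "\<forall>x\<in>space M. \<forall>y\<in>{1..n}. 0 \<le> c x y \<and> c x y \<le> 1"
    using c_range by blast
  have integrable_INF: "integrable M f" if "\<And>x. x \<in> space M \<Longrightarrow> f x = 1 - max_decision_gain n p c x"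
    for f :: "'x \<Rightarrow> real"
    using Bochner_Integration.integrable_cong[where M = M and N = M and f = f, OF refl that]
      Bochner_Integration.integrable_diff[OF finite_measure.integrable_const[OF fin]
        integrable_max_decision_gain[OF fin c_meas p_meas p_nonneg p_sum c_range']]
    by simp
  show ?thesis
  proof (rule excess_risk_bound_from_conditional[OF _ _ _ _
        cond_excess_L_def_le_cond_excess_L_RL2D[OF sel sym compl n h]])
    show "integrable M (cond_risk n p (L_def sel n c) h)"
      by (rule integrable_cond_risk_L_def[OF fin sel h_meas c_meas p_meas p_nonneg p_sum c_range'])
    show "integrable M (cond_risk n p (L_RL2D (\<lambda>t. 1 - t) n c) h)"
      by (rule integrable_cond_risk_L_RL2D[OF fin h_meas c_meas p_meas p_nonneg p_sum c_range'])
    show "integrable M (\<lambda>x. INF g\<in>H. cond_risk n p (L_def sel n c) g x)"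
      using p_sum by (intro integrable_INF INF_cond_risk_L_def[OF sel sym compl n \<open>H \<noteq> {}\<close>]) blast
    show "integrable M (\<lambda>x. INF g\<in>H. cond_risk n p (L_RL2D (\<lambda>t. 1 - t) n c) g x)"
      using p_nonneg p_sum c_range
      by (intro integrable_INF INF_cond_risk_L_RL2D[OF sym compl n \<open>H \<noteq> {}\<close>]) blast+
  qed (use p_nonneg p_sum c_range in blast)+
qed

end
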